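(* Let $k$ be an integer, $m$ a positive integer and $p$ a prime, and let $g_k(m)=\sum_{d>0,\,d^2\mid m}\mu(d)\sigma_{k-1}(m/d^2)$, where $\mu$ is the Möbius function and $\sigma_{k-1}(m)=\sum_{d>0,\,d\mid m}d^{k-1}$. Then $g_k(mp)=(p^{k-1}+1)g_k(m)$ if $p\nmid m$, and $g_k(mp)=p^{k-1}g_k(m)$ if $p\mid m$. *)

theory Defs
  imports Complex_Main "HOL-Computational_Algebra.Squarefree" "HOL-Computational_Algebra.Primes"
begin

definition moebius_mu :: "nat \<Rightarrow> int" where
  "moebius_mu d = (if squarefree d then (-1) ^ card (prime_factors d) else 0)"

definition divisor_sigma :: "int \<Rightarrow> nat \<Rightarrow> real" where
  "divisor_sigma s n = (\<Sum>d \<in> {d. 0 < d \<and> d dvd n}. real d powi s)"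

definition g_fun :: "int \<Rightarrow> nat \<Rightarrow> real" where
  "g_fun k m = (\<Sum>d \<in> {d. 0 < d \<and> d^2 dvd m}. of_int (moebius_mu d) * divisor_sigma (k - 1) (m div d^2))"

end

theory Submission
  imports Defs
begin

text \<open>
  Fix the prime \<open>p\<close> and split the sum defining \<open>g\<^sub>k(X)\<close> according to whether \<open>p\<close> divides \<open>d\<close>.
  Since \<open>\<mu>(p e) = -\<mu>(e)\<close> for \<open>p \<nmid> e\<close> and \<open>\<mu>(p e) = 0\<close> otherwise, this gives
  \<open>g\<^sub>k(X) = F(X) - F(X/p\<^sup>2)\<close> (the second term only when \<open>p\<^sup>2 | X\<close>), where \<open>F\<close> is the same sum
  restricted to \<open>p \<nmid> d\<close> (the operator \<open>coprime_moebius_sum p\<close> applied to \<open>\<sigma>\<close>). Writing \<open>\<tau>\<close> for the divisor sum over the divisors prime to \<open>p\<close>,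
  one has \<open>\<sigma>(pY) = \<tau>(Y) + p\<^sup>k\<^sup>-\<^sup>1 \<sigma>(Y)\<close> and \<open>\<tau>(pY) = \<tau>(Y)\<close>; as \<open>p \<nmid> d\<close> these identities pass
  through the restricted sum, so with \<open>T\<close> the restricted sum built from \<open>\<tau>\<close> we get
  \<open>F(pX) = T(X) + p\<^sup>k\<^sup>-\<^sup>1 F(X)\<close>, \<open>T(pX) = T(X)\<close>, and \<open>T(X) = F(X)\<close> for \<open>p \<nmid> X\<close>.
\<close>

definition divisor_sigma_coprime :: "nat \<Rightarrow> int \<Rightarrow> nat \<Rightarrow> real" where
  "divisor_sigma_coprime p s n = (\<Sum>e \<in> {e. 0 < e \<and> e dvd n \<and> \<not> p dvd e}. real e powi s)"

definition coprime_moebius_sum :: "nat \<Rightarrow> (nat \<Rightarrow> real) \<Rightarrow> nat \<Rightarrow> real" where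
  "coprime_moebius_sum p h X =
     (\<Sum>d \<in> {d. 0 < d \<and> d\<^sup>2 dvd X \<and> \<not> p dvd d}. of_int (moebius_mu d) * h (X div d\<^sup>2))"

lemma finite_divisors_with:
  fixes n :: nat
  assumes "n > 0"
  shows "finite {e. 0 < e \<and> e dvd n \<and> P e}"
  by (rule finite_subset[of _ "{..n}"]) (use assms in \<open>auto dest: dvd_imp_le\<close>)

lemma finite_square_divisors:
  fixes n :: nat
  assumes "n > 0"
  shows "finite {d. 0 < d \<and> d\<^sup>2 dvd n}"
  using finite_divisors_with[OF assms, of "\<lambda>_. True"]
  by (rule finite_subset[rotated]) (auto intro: dvd_trans[OF dvd_power[of 2]])

lemma prime_dvd_mult_cancel:
  fixes p :: nat
  assumes "prime p" "\<not> p dvd e"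
  shows "e dvd p * n \<longleftrightarrow> e dvd n"
  using assms by (metis coprime_commute coprime_dvd_mult_right_iff prime_imp_coprime)

lemma divisor_sigma_prime_mult:
  assumes p: "prime p" and n: "n > 0"
  shows "divisor_sigma s (p * n) = divisor_sigma_coprime p s n + real p powi s * divisor_sigma s n"
proof -
  define A where "A = {e. 0 < e \<and> e dvd n \<and> \<not> p dvd e}"
  define B where "B = {f. 0 < f \<and> f dvd n}"
  have p0: "p > 0" using p by (simp add: prime_gt_0_nat)
  have split: "{e. 0 < e \<and> e dvd p * n} = A \<union> (\<lambda>f. p * f) ` B"
  proof (intro equalityI subsetI)
    fix e assume e: "e \<in> {e. 0 < e \<and> e dvd p * n}"
    show "e \<in> A \<union> (\<lambda>f. p * f) ` B"
    proof (cases "p dvd e")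
      case True
      then obtain f where "e = p * f" by blast
      with e p0 show ?thesis by (auto simp: B_def)
    qed (use e p in \<open>auto simp: A_def prime_dvd_mult_cancel\<close>)
  qed (use p0 in \<open>auto simp: A_def B_def\<close>)
  have "divisor_sigma s (p * n) = divisor_sigma_coprime p s n + (\<Sum>f\<in>B. real (p * f) powi s)"
    unfolding divisor_sigma_def divisor_sigma_coprime_def split A_def[symmetric]
    using finite_divisors_with[OF n] finite_divisors_with[OF n, of "\<lambda>_. True"] p0
    by (subst sum.union_disjoint) (auto simp: A_def B_def sum.reindex inj_on_def)
  also have "(\<Sum>f\<in>B. real (p * f) powi s) = real p powi s * divisor_sigma s n"
    by (simp add: B_def divisor_sigma_def sum_distrib_left power_int_mult_distrib)
  finally show ?thesis .
qed

lemma divisor_sigma_coprime_prime_mult: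
  assumes "prime p"
  shows "divisor_sigma_coprime p s (p * n) = divisor_sigma_coprime p s n"
  unfolding divisor_sigma_coprime_def
  by (rule sum.cong) (use assms in \<open>auto simp: prime_dvd_mult_cancel\<close>)

lemma divisor_sigma_coprime_eq_divisor_sigma:
  assumes "\<not> p dvd n"
  shows "divisor_sigma_coprime p s n = divisor_sigma s n"
proof -
  have "{e. 0 < e \<and> e dvd n \<and> \<not> p dvd e} = {e. 0 < e \<and> e dvd n}"
    using assms dvd_trans by blast
  then show ?thesis by (simp add: divisor_sigma_coprime_def divisor_sigma_def)
qed

lemma moebius_mu_prime_mult:
  assumes p: "prime p" and e: "e > 0"
  shows "moebius_mu (p * e) = (if p dvd e then 0 else - moebius_mu e)"
proof (cases "p dvd e")
  case True
  then have "p\<^sup>2 dvd p * e" by (simp add: power2_eq_square)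
  then have "\<not> squarefree (p * e)"
    using p unfolding squarefree_def by (metis nat_dvd_1_iff_1 not_prime_1)
  with True show ?thesis by (simp add: moebius_mu_def)
next
  case False
  have "coprime p e" using False p by (simp add: prime_imp_coprime)
  then have sq: "squarefree (p * e) \<longleftrightarrow> squarefree e"
    using squarefree_mult_coprime squarefree_prime[OF p] squarefree_multD(2) by blast
  have "prime_factors (p * e) = insert p (prime_factors e)"
    using prime_factors_product[of p e] p e prime_prime_factors[OF p] by (auto simp: prime_gt_0_nat)
  moreover have "p \<notin> prime_factors e" using False by (auto dest: in_prime_factors_imp_dvd)
  ultimately have "card (prime_factors (p * e)) = Suc (card (prime_factors e))" by simp
  with False sq show ?thesis by (simp add: moebius_mu_def)
qed

lemma coprime_moebius_sum_prime_mult: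
  assumes p: "prime p"
  shows "coprime_moebius_sum p h (p * X) = coprime_moebius_sum p (\<lambda>Y. h (p * Y)) X"
proof -
  have "{d. 0 < d \<and> d\<^sup>2 dvd p * X \<and> \<not> p dvd d} = {d. 0 < d \<and> d\<^sup>2 dvd X \<and> \<not> p dvd d}"
    using p by (auto simp: prime_dvd_mult_cancel prime_dvd_power_iff)
  then show ?thesis
    unfolding coprime_moebius_sum_def by (intro sum.cong) (auto simp: div_mult_swap)
qed

lemma coprime_moebius_sum_cong:
  assumes "X > 0" and "\<And>Y. Y > 0 \<Longrightarrow> h Y = h' Y"
  shows "coprime_moebius_sum p h X = coprime_moebius_sum p h' X"
  unfolding coprime_moebius_sum_def
  using assms by (intro sum.cong) (auto simp: dvd_div_eq_0_iff dest: dvd_imp_le)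

lemma coprime_moebius_sum_add_scaled:
  "coprime_moebius_sum p (\<lambda>Y. h Y + c * h' Y) X
     = coprime_moebius_sum p h X + c * coprime_moebius_sum p h' X"
  unfolding coprime_moebius_sum_def
  by (simp add: distrib_left sum.distrib sum_distrib_left mult.left_commute)

lemma g_fun_eq_coprime_moebius_sum:
  fixes k :: int
  assumes p: "prime p" and X: "X > 0"
  shows "g_fun k X = coprime_moebius_sum p (divisor_sigma (k - 1)) X
           - (if p\<^sup>2 dvd X then coprime_moebius_sum p (divisor_sigma (k - 1)) (X div p\<^sup>2) else 0)"
    (is "_ = ?F X - _")
proof -
  define f where "f d = of_int (moebius_mu d) * divisor_sigma (k - 1) (X div d\<^sup>2)" for d
  define D where "D = {d. 0 < d \<and> d\<^sup>2 dvd X}"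
  define E where "E = {e. 0 < e \<and> (p * e)\<^sup>2 dvd X}"
  have p0: "p > 0" using p by (simp add: prime_gt_0_nat)
  have "g_fun k X = sum f (D - {d. p dvd d}) + sum f (D \<inter> {d. p dvd d})"
    using sum.Int_Diff[OF finite_square_divisors[OF X], of f "{d. p dvd d}"]
    by (simp add: g_fun_def f_def D_def add.commute)
  also have "sum f (D - {d. p dvd d}) = ?F X"
    unfolding coprime_moebius_sum_def f_def D_def by (rule sum.cong) auto
  also have "D \<inter> {d. p dvd d} = (\<lambda>e. p * e) ` E"
    using p0 by (auto simp: D_def E_def)
  also have "sum f ((\<lambda>e. p * e) ` E) = (\<Sum>e\<in>E. f (p * e))"
    using p0 by (simp add: sum.reindex inj_on_def)
  also have "\<dots> = - (\<Sum>e\<in>E \<inter> {e. \<not> p dvd e}. of_int (moebius_mu e)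
                * divisor_sigma (k - 1) (X div (p * e)\<^sup>2))"
  proof -
    have "finite E"
      by (rule finite_subset[OF _ finite_square_divisors[OF X]])
         (auto simp: E_def power_mult_distrib dest: dvd_mult_right)
    show ?thesis
      unfolding sum_negf[symmetric] sum.inter_restrict[OF \<open>finite E\<close>]
      by (rule sum.cong) (auto simp: f_def E_def moebius_mu_prime_mult[OF p])
  qed
  also have "\<dots> = - (if p\<^sup>2 dvd X then ?F (X div p\<^sup>2) else 0)"
  proof (cases "p\<^sup>2 dvd X")
    case True
    then obtain Z where Z: "X = p\<^sup>2 * Z" by blast
    have "E \<inter> {e. \<not> p dvd e} = {e. 0 < e \<and> e\<^sup>2 dvd Z \<and> \<not> p dvd e}"
      using p0 by (auto simp: E_def Z power_mult_distrib)
    moreover have "X div (p * e)\<^sup>2 = Z div e\<^sup>2" for e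
      using p0 by (simp add: Z power_mult_distrib div_mult_mult1)
    ultimately show ?thesis
      using True p0 by (simp add: coprime_moebius_sum_def Z)
  next
    case False
    then have "E = {}" by (auto simp: E_def power_mult_distrib dest: dvd_mult_left)
    with False show ?thesis by simp
  qed
  finally show ?thesis by simp
qed

lemma coprime_moebius_sum_divisor_sigma_prime_mult:
  assumes p: "prime p" and X: "X > 0"
  shows "coprime_moebius_sum p (divisor_sigma s) (p * X)
           = coprime_moebius_sum p (divisor_sigma_coprime p s) X
             + real p powi s * coprime_moebius_sum p (divisor_sigma s) X"
  unfolding coprime_moebius_sum_prime_mult[OF p] coprime_moebius_sum_add_scaled[symmetric]
  by (rule coprime_moebius_sum_cong[OF X]) (rule divisor_sigma_prime_mult[OF p])

lemma coprime_moebius_sum_divisor_sigma_coprime_prime_mult: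
  assumes "prime p"
  shows "coprime_moebius_sum p (divisor_sigma_coprime p s) (p * X)
           = coprime_moebius_sum p (divisor_sigma_coprime p s) X"
  using assms by (simp add: coprime_moebius_sum_prime_mult divisor_sigma_coprime_prime_mult)

lemma coprime_moebius_sum_divisor_sigma_coprime_eq:
  assumes "\<not> p dvd X"
  shows "coprime_moebius_sum p (divisor_sigma_coprime p s) X
           = coprime_moebius_sum p (divisor_sigma s) X"
  unfolding coprime_moebius_sum_def
proof (rule sum.cong)
  fix d assume "d \<in> {d. 0 < d \<and> d\<^sup>2 dvd X \<and> \<not> p dvd d}"
  then have "\<not> p dvd X div d\<^sup>2"
    using assms by (metis dvd_mult dvd_mult_div_cancel mem_Collect_eq)
  then show "of_int (moebius_mu d) * divisor_sigma_coprime p s (X div d\<^sup>2)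
               = of_int (moebius_mu d) * divisor_sigma s (X div d\<^sup>2)"
    by (simp add: divisor_sigma_coprime_eq_divisor_sigma)
qed simp

lemma coprime_moebius_sum_divisor_sigma_coprime_diff:
  assumes p: "prime p" and X: "X > 0"
  shows "coprime_moebius_sum p (divisor_sigma_coprime p s) X - coprime_moebius_sum p (divisor_sigma s) X
           = - (if p dvd X then real p powi s * coprime_moebius_sum p (divisor_sigma s) (X div p) else 0)"
proof (cases "p dvd X")
  case True
  then obtain Y where "X = p * Y" by blast
  with p X show ?thesis
    by (simp add: coprime_moebius_sum_divisor_sigma_prime_mult
                  coprime_moebius_sum_divisor_sigma_coprime_prime_mult prime_gt_0_nat)
qed (simp add: coprime_moebius_sum_divisor_sigma_coprime_eq)

lemma g_fun_prime_mult_not_dvd: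
  fixes k :: int
  assumes p: "prime p" and m: "m > 0" and "\<not> p dvd m"
  shows "g_fun k (p * m) = (real p powi (k - 1) + 1) * g_fun k m"
proof -
  let ?F = "coprime_moebius_sum p (divisor_sigma (k - 1))"
  have "\<not> p\<^sup>2 dvd p * m" "\<not> p\<^sup>2 dvd m"
    using assms by (auto simp: power2_eq_square prime_gt_0_nat dest: dvd_mult_left)
  then have "g_fun k (p * m) = ?F (p * m)" "g_fun k m = ?F m"
    using g_fun_eq_coprime_moebius_sum[OF p] m p by (simp_all add: prime_gt_0_nat)
  then show ?thesis
    using \<open>\<not> p dvd m\<close> by (simp add: coprime_moebius_sum_divisor_sigma_prime_mult[OF p m]
                                    coprime_moebius_sum_divisor_sigma_coprime_eq distrib_right)
qed

lemma g_fun_prime_mult_dvd: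
  fixes k :: int
  assumes p: "prime p" and M: "M > 0"
  shows "g_fun k (p * (p * M)) = real p powi (k - 1) * g_fun k (p * M)"
proof -
  let ?F = "coprime_moebius_sum p (divisor_sigma (k - 1))"
  let ?T = "coprime_moebius_sum p (divisor_sigma_coprime p (k - 1))"
  let ?P = "real p powi (k - 1)"
  have p0: "p > 0" using p by (simp add: prime_gt_0_nat)
  have "g_fun k (p * (p * M)) = ?F (p * (p * M)) - ?F M"
    using g_fun_eq_coprime_moebius_sum[OF p] p0 M by (simp add: power2_eq_square mult_ac)
  also have "\<dots> = ?P * ?F (p * M) + (?T M - ?F M)"
    using p0 M by (simp add: coprime_moebius_sum_divisor_sigma_prime_mult[OF p]
                             coprime_moebius_sum_divisor_sigma_coprime_prime_mult[OF p])
  also have "\<dots> = ?P * (?F (p * M) - (if p dvd M then ?F (M div p) else 0))"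
    by (simp add: coprime_moebius_sum_divisor_sigma_coprime_diff[OF p M] right_diff_distrib)
  also have "?F (p * M) - (if p dvd M then ?F (M div p) else 0) = g_fun k (p * M)"
    using g_fun_eq_coprime_moebius_sum[OF p, of "p * M" k] p0 M
    by (simp add: power2_eq_square)
  finally show ?thesis .
qed

theorem lemma4p1:
  fixes k :: int and m p :: nat
  assumes "m > 0" and "prime p"
  shows "(\<not> p dvd m \<longrightarrow> g_fun k (m * p) = (real p powi (k - 1) + 1) * g_fun k m)
       \<and> (p dvd m \<longrightarrow> g_fun k (m * p) = real p powi (k - 1) * g_fun k m)"
proof (intro conjI impI)
  assume "\<not> p dvd m"
  then show "g_fun k (m * p) = (real p powi (k - 1) + 1) * g_fun k m"
    using g_fun_prime_mult_not_dvd[OF \<open>prime p\<close> \<open>m > 0\<close>] by (simp add: mult.commute)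
next
  assume "p dvd m"
  then obtain M where "m = p * M" "M > 0" using \<open>m > 0\<close> by fastforce
  then show "g_fun k (m * p) = real p powi (k - 1) * g_fun k m"
    using g_fun_prime_mult_dvd[OF \<open>prime p\<close>] by (simp add: mult.commute)
qed

end
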